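(* Let $m=pq$ with $p,q$ distinct primes, let $(K_n,\alpha)$ be an edge-labeled complete graph over $\mathbb{Z}/m\mathbb{Z}$ on $v_1,\dots,v_n$ (every edge labeled by $\langle p\rangle$ or $\langle q\rangle$), and let $(K_{n+1},\alpha)$ be obtained by adding a vertex $v_{n+1}$ joined to each of $v_1,\dots,v_n$ (the star $S_n$), keeping the labels on the edges of $K_n$ and labeling the new edges $v_jv_{n+1}$ by $\langle p\rangle$ or $\langle q\rangle$. Suppose that $[\mathbb{Z}/m\mathbb{Z}]_{(K_n,\alpha)}$ has a minimum generating set consisting of the trivial spline $(1,\dots,1)$ and $i-1$ other flow-up splines (for some $1<i\le n$), each of whose entries lies in the ideal $\langle p\rangle$. Then: (a) if all edge labels of the added star $S_n$ are contained in $\langle p\rangle$, then $\operatorname{rk}[\mathbb{Z}/m\mathbb{Z}]_{(K_{n+1},\alpha)}=\operatorname{rk}[\mathbb{Z}/m\mathbb{Z}]_{(K_n,\alpha)}+1$; (b) if exactly one edge label of the added star $S_n$ is contained in $\langle q\rangle$ and the others are contained in $\langle p\rangle$, then $\operatorname{rk}[\mathbb{Z}/m\mathbb{Z}]_{(K_{n+1},\alpha)}=\operatorname{rk}[\mathbb{Z}/m\mathbb{Z}]_{(K_n,\alpha)}$.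
   Context: Edges are labeled by nonzero proper ideals of $\mathbb{Z}/m\mathbb{Z}$. A spline on an edge-labeled graph $(G,\alpha)$ over $\mathbb{Z}/m\mathbb{Z}$ is a vector $(f_{v_1},\dots,f_{v_n})\in(\mathbb{Z}/m\mathbb{Z})^n$ with $f_{v_i}-f_{v_j}\in\alpha(v_iv_j)$ for every edge; the splines form a $\mathbb{Z}$-module $[\mathbb{Z}/m\mathbb{Z}]_{(G,\alpha)}$. An $i$-th flow-up class (flow-up spline) is a spline with $f_{v_i}\ne0$ and $f_{v_t}=0$ for $t<i$. A minimum generating set is a generating set of the $\mathbb{Z}$-module of smallest possible size; that size is the rank $\operatorname{rk}$. *)

theory Defs
  imports "HOL-Computational_Algebra.Primes"
begin

text \<open>Elements of Z/mZ are represented by their canonical representatives in [0,m).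
  Vertices are 1..N. An edge label is given by an integer generator a (with a dividing m),
  standing for the ideal generated by a in Z/mZ; for representatives x,y we have
  x - y in that ideal iff a divides x - y as integers.
  A vertex labeling lab u v gives the label of the edge uv of the complete graph K_N.\<close>

definition splines :: "int \<Rightarrow> (nat \<Rightarrow> nat \<Rightarrow> int) \<Rightarrow> nat \<Rightarrow> (nat \<Rightarrow> int) set" where
  "splines m lab N = {f. (\<forall>v. v \<notin> {1..N} \<longrightarrow> f v = 0)
      \<and> (\<forall>v\<in>{1..N}. 0 \<le> f v \<and> f v < m)
      \<and> (\<forall>u\<in>{1..N}. \<forall>v\<in>{1..N}. u \<noteq> v \<longrightarrow> lab u v dvd f u - f v)}"

definition is_gen_set :: "int \<Rightarrow> nat \<Rightarrow> (nat \<Rightarrow> int) set \<Rightarrow> (nat \<Rightarrow> int) set \<Rightarrow> bool" where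
  "is_gen_set m N S G \<longleftrightarrow> finite G \<and> G \<subseteq> S \<and>
     (\<forall>s\<in>S. \<exists>c :: (nat \<Rightarrow> int) \<Rightarrow> int. \<forall>v\<in>{1..N}. s v = (\<Sum>g\<in>G. c g * g v) mod m)"

definition rk :: "int \<Rightarrow> nat \<Rightarrow> (nat \<Rightarrow> int) set \<Rightarrow> nat" where
  "rk m N S = (LEAST k. \<exists>G. is_gen_set m N S G \<and> card G = k)"

definition min_gen_set :: "int \<Rightarrow> nat \<Rightarrow> (nat \<Rightarrow> int) set \<Rightarrow> (nat \<Rightarrow> int) set \<Rightarrow> bool" where
  "min_gen_set m N S G \<longleftrightarrow> is_gen_set m N S G \<and> card G = rk m N S"

definition flow_up :: "nat \<Rightarrow> (nat \<Rightarrow> int) \<Rightarrow> nat \<Rightarrow> bool" where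
  "flow_up N f k \<longleftrightarrow> k \<in> {1..N} \<and> f k \<noteq> 0 \<and> (\<forall>t\<in>{1..N}. t < k \<longrightarrow> f t = 0)"

definition trivial_spline :: "nat \<Rightarrow> nat \<Rightarrow> int" where
  "trivial_spline N = (\<lambda>v. if v \<in> {1..N} then 1 else 0)"

end

(*
  Expanding a spline of K_n in the generators 1 and F, whose members are
  multiples of p, shows that all its entries are congruent mod p to the coefficient of 1.
  Minimality of {1} u F makes the reductions mod q of these generators linearly independent
  over Z/q: if some f in F had a coefficient prime to q in a relation mod q, then by the
  Chinese remainder theorem f would be a combination of the other generators mod pq.

  (a) If every new edge is labelled p, a spline on K_(n+1) is a spline on K_n extended by any
  value congruent mod p to that common residue.  Hence the generators, extended by 1 resp. 0,
  together with p e_(n+1) generate, and they remain independent mod q; comparing the number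
  of residue vectors mod q reachable from them with q^|G'| for any generating set G' gives
  the lower bound.

  (b) If exactly the edge v_j v_(n+1) is labelled q, the value at v_(n+1) agrees with the
  value at v_j mod q, and mod p through any other v_k; hence it equals the value at v_j, and
  restriction to K_n is a bijection of spline modules compatible with combinations.
*)
theory Submission
  imports Defs "HOL-Library.FuncSet" "HOL-Number_Theory.Cong"
begin

section \<open>Generating sets and rank\<close>

lemma rk_le: "is_gen_set m N S G \<Longrightarrow> rk m N S \<le> card G"
  unfolding rk_def by (rule Least_le) blast

lemma ex_gen_set_card_rk:
  "is_gen_set m N S G0 \<Longrightarrow> \<exists>G. is_gen_set m N S G \<and> card G = rk m N S"
  unfolding rk_def by (rule LeastI_ex) blast

lemma is_gen_set_image:
  assumes fin: "finite I" and "s ` I \<subseteq> S"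
    and span: "\<forall>t\<in>S. \<exists>c. \<forall>v\<in>{1..N}. t v = (\<Sum>x\<in>I. c x * s x v) mod m"
  shows "is_gen_set m N S (s ` I)"
  unfolding is_gen_set_def
proof (intro conjI ballI)
  show "finite (s ` I)" using fin by simp
  show "s ` I \<subseteq> S" by fact
  fix t assume "t \<in> S"
  then obtain c where c: "\<forall>v\<in>{1..N}. t v = (\<Sum>x\<in>I. c x * s x v) mod m" using span by blast
  define c' where "c' g = sum c {x\<in>I. s x = g}" for g
  have "(\<Sum>g\<in>s ` I. c' g * g v) = (\<Sum>x\<in>I. c x * s x v)" for v
  proof -
    have "(\<Sum>g\<in>s ` I. c' g * g v) = (\<Sum>g\<in>s ` I. \<Sum>x\<in>{x\<in>I. s x = g}. c x * s x v)"
      unfolding c'_def sum_distrib_right by (rule sum.cong) auto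
    also have "\<dots> = (\<Sum>x\<in>I. c x * s x v)"
      by (rule sum.image_gen[symmetric, OF fin])
    finally show ?thesis .
  qed
  then show "\<exists>c. \<forall>v\<in>{1..N}. t v = (\<Sum>g\<in>s ` I. c g * g v) mod m"
    using c by (intro exI[where x=c']) simp
qed

lemma is_gen_set_Diff:
  assumes gen: "is_gen_set m N S G" and "g0 \<in> G"
    and g0: "\<forall>v\<in>{1..N}. g0 v = (\<Sum>g\<in>G-{g0}. e g * g v) mod m"
  shows "is_gen_set m N S (G - {g0})"
  unfolding is_gen_set_def
proof (intro conjI ballI)
  have fin: "finite G" using gen unfolding is_gen_set_def by blast
  then show "finite (G - {g0})" by simp
  show "G - {g0} \<subseteq> S" using gen unfolding is_gen_set_def by blast
  fix s assume "s \<in> S"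
  then obtain c where c: "\<forall>v\<in>{1..N}. s v = (\<Sum>g\<in>G. c g * g v) mod m"
    using gen unfolding is_gen_set_def by blast
  have "s v = (\<Sum>g\<in>G-{g0}. (c g + c g0 * e g) * g v) mod m" if v: "v \<in> {1..N}" for v
  proof -
    have "s v = (c g0 * g0 v + (\<Sum>g\<in>G-{g0}. c g * g v)) mod m"
      using c v fin \<open>g0 \<in> G\<close> by (simp add: sum.remove)
    also have "\<dots> = (c g0 * (\<Sum>g\<in>G-{g0}. e g * g v) + (\<Sum>g\<in>G-{g0}. c g * g v)) mod m"
    proof -
      have "(c g0 * (x mod m) + y) mod m = (c g0 * x + y) mod m" for x y
        by (metis mod_add_left_eq mod_mult_right_eq)
      then show ?thesis using g0 v by simp
    qed
    also have "\<dots> = (\<Sum>g\<in>G-{g0}. (c g + c g0 * e g) * g v) mod m"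
      by (simp add: sum_distrib_left sum.distrib[symmetric] algebra_simps)
    finally show ?thesis .
  qed
  then show "\<exists>c. \<forall>v\<in>{1..N}. s v = (\<Sum>g\<in>G-{g0}. c g * g v) mod m"
    by (intro exI[where x="\<lambda>g. c g + c g0 * e g"]) blast
qed

lemma min_gen_set_irredundant:
  assumes "min_gen_set m N S G" and "g0 \<in> G"
  shows "\<not> (\<forall>v\<in>{1..N}. g0 v = (\<Sum>g\<in>G-{g0}. e g * g v) mod m)"
proof
  assume "\<forall>v\<in>{1..N}. g0 v = (\<Sum>g\<in>G-{g0}. e g * g v) mod m"
  then have "is_gen_set m N S (G - {g0})"
    using assms is_gen_set_Diff unfolding min_gen_set_def by blast
  then have "rk m N S \<le> card (G - {g0})" by (rule rk_le)
  moreover have "finite G" using assms(1) unfolding min_gen_set_def is_gen_set_def by blast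
  ultimately show False
    using assms card_Diff1_less[of G g0] unfolding min_gen_set_def by linarith
qed

lemma redundant_if_coeff_not_dvd:
  fixes p q :: int
  assumes "prime p" "prime q" "p \<noteq> q" and "finite G" and "g0 \<in> G"
    and g0_dvd: "\<forall>v\<in>{1..N}. p dvd g0 v"
    and g0_range: "\<forall>v\<in>{1..N}. 0 \<le> g0 v \<and> g0 v < p * q"
    and rel: "\<forall>v\<in>{1..N}. q dvd (\<Sum>g\<in>G. d g * g v)" and "\<not> q dvd d g0"
  shows "\<exists>e. \<forall>v\<in>{1..N}. g0 v = (\<Sum>g\<in>G-{g0}. e g * g v) mod (p * q)"
proof -
  have "coprime (p * d g0) q"
    using assms(1-3,9) by (simp add: coprime_commute prime_imp_coprime primes_coprime)
  then obtain w where "[p * d g0 * w = 1] (mod q)" using cong_solve_coprime_int by blast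
  then have w: "q dvd p * w * d g0 - 1" by (simp add: cong_iff_dvd_diff ac_simps)
  \<comment> \<open>\<open>-p w\<close> vanishes mod p and inverts \<open>d g0\<close> mod q, so it turns the relation into \<open>g0\<close>.\<close>
  have "g0 v = (\<Sum>g\<in>G-{g0}. (- p * w * d g) * g v) mod (p * q)" if v: "v \<in> {1..N}" for v
  proof -
    define X where "X = (\<Sum>g\<in>G-{g0}. d g * g v)"
    have rel_v: "q dvd d g0 * g0 v + X" using rel v assms(4,5) by (simp add: X_def sum.remove)
    have "q dvd p * w * (d g0 * g0 v + X) - (p * w * d g0 - 1) * g0 v"
      using rel_v w by (simp add: dvd_diff dvd_mult dvd_mult2)
    also have "p * w * (d g0 * g0 v + X) - (p * w * d g0 - 1) * g0 v = g0 v - (- p * w * X)"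
      by (simp add: algebra_simps)
    finally have "q dvd g0 v - (- p * w * X)" .
    moreover have "p dvd g0 v - (- p * w * X)" using g0_dvd v by simp
    ultimately have "p * q dvd g0 v - (- p * w * X)"
      using assms(1-3) by (simp add: divides_mult primes_coprime)
    then have "g0 v mod (p * q) = (- p * w * X) mod (p * q)" by (simp add: mod_eq_dvd_iff)
    moreover have "(\<Sum>g\<in>G-{g0}. (- p * w * d g) * g v) = - p * w * X"
      by (simp add: X_def sum_distrib_left mult.assoc)
    ultimately show ?thesis using g0_range v by simp
  qed
  then show ?thesis by (intro exI[where x="\<lambda>g. - p * w * d g"]) blast
qed

lemma is_gen_set_transfer:
  assumes gen: "is_gen_set m N S G" and onto: "T ` S = S'"
    and \<sigma>: "\<sigma> ` {1..N'} \<subseteq> {1..N}"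
    and T: "\<And>s v. s \<in> S \<Longrightarrow> v \<in> {1..N'} \<Longrightarrow> T s v = s (\<sigma> v)"
  shows "is_gen_set m N' S' (T ` G)"
proof (rule is_gen_set_image)
  have GS: "finite G" "G \<subseteq> S" using gen unfolding is_gen_set_def by auto
  then show "finite G" "T ` G \<subseteq> S'" using onto by auto
  show "\<forall>t\<in>S'. \<exists>c. \<forall>v\<in>{1..N'}. t v = (\<Sum>g\<in>G. c g * T g v) mod m"
  proof
    fix t assume "t \<in> S'"
    then obtain s where s: "s \<in> S" "t = T s" using onto by blast
    then obtain c where c: "\<forall>v\<in>{1..N}. s v = (\<Sum>g\<in>G. c g * g v) mod m"
      using gen unfolding is_gen_set_def by blast
    have "t v = (\<Sum>g\<in>G. c g * T g v) mod m" if v: "v \<in> {1..N'}" for v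
    proof -
      have "t v = s (\<sigma> v)" using s T v by simp
      also have "\<dots> = (\<Sum>g\<in>G. c g * g (\<sigma> v)) mod m" using c \<sigma> v by blast
      also have "\<dots> = (\<Sum>g\<in>G. c g * T g v) mod m"
        using GS T v by (simp cong: sum.cong add: subset_iff)
      finally show ?thesis .
    qed
    then show "\<exists>c. \<forall>v\<in>{1..N'}. t v = (\<Sum>g\<in>G. c g * T g v) mod m"
      by (intro exI[where x=c]) blast
  qed
qed

lemma rk_transfer_le:
  assumes "is_gen_set m N S G0" and "T ` S = S'" and "\<sigma> ` {1..N'} \<subseteq> {1..N}"
    and "\<And>s v. s \<in> S \<Longrightarrow> v \<in> {1..N'} \<Longrightarrow> T s v = s (\<sigma> v)"
  shows "rk m N' S' \<le> rk m N S"
proof -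
  obtain G where G: "is_gen_set m N S G" "card G = rk m N S"
    using ex_gen_set_card_rk[OF assms(1)] by blast
  have "rk m N' S' \<le> card (T ` G)"
    using is_gen_set_transfer[OF G(1) assms(2-4)] by (rule rk_le)
  also have "\<dots> \<le> card G"
    using G(1) by (simp add: is_gen_set_def card_image_le)
  finally show ?thesis using G(2) by simp
qed

section \<open>Linear combinations modulo m\<close>

definition lin_comb :: "int \<Rightarrow> nat \<Rightarrow> 'a set \<Rightarrow> ('a \<Rightarrow> nat \<Rightarrow> int) \<Rightarrow> ('a \<Rightarrow> int) \<Rightarrow> nat \<Rightarrow> int"
  where "lin_comb m N I s c = (\<lambda>v. if v \<in> {1..N} then (\<Sum>x\<in>I. c x * s x v) mod m else 0)"

definition independent_mod :: "int \<Rightarrow> nat \<Rightarrow> 'a set \<Rightarrow> ('a \<Rightarrow> nat \<Rightarrow> int) \<Rightarrow> bool"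
  where "independent_mod q N I s \<longleftrightarrow>
    (\<forall>c. (\<forall>v\<in>{1..N}. q dvd (\<Sum>x\<in>I. c x * s x v)) \<longrightarrow> (\<forall>x\<in>I. q dvd c x))"

lemma independent_modD:
  assumes "independent_mod q N I s" and "\<forall>v\<in>{1..N}. q dvd (\<Sum>x\<in>I. c x * s x v)" and "x \<in> I"
  shows "q dvd c x"
  using assms unfolding independent_mod_def by blast

lemma lin_comb_in_splines:
  assumes "0 < m" and "\<forall>x\<in>I. s x \<in> splines m lab N"
    and "\<forall>u\<in>{1..N}. \<forall>v\<in>{1..N}. u \<noteq> v \<longrightarrow> lab u v dvd m"
  shows "lin_comb m N I s c \<in> splines m lab N"
  unfolding splines_def
proof (intro CollectI conjI ballI allI impI)
  fix u v assume uv: "u \<in> {1..N}" "v \<in> {1..N}" "u \<noteq> v"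
  have "lab u v dvd (\<Sum>x\<in>I. c x * s x u) - (\<Sum>x\<in>I. c x * s x v)"
    unfolding sum_subtractf[symmetric] right_diff_distrib[symmetric]
    using assms(2) uv unfolding splines_def by (intro dvd_sum dvd_mult) auto
  then have "(\<Sum>x\<in>I. c x * s x u) mod m mod lab u v = (\<Sum>x\<in>I. c x * s x v) mod m mod lab u v"
    using assms(3) uv by (simp add: mod_eq_dvd_iff [symmetric] mod_mod_cancel)
  then show "lab u v dvd lin_comb m N I s c u - lin_comb m N I s c v"
    using uv by (simp add: lin_comb_def mod_eq_dvd_iff)
qed (use assms(1) in \<open>auto simp: lin_comb_def\<close>)

lemma lin_comb_mod_cancel:
  "q dvd m \<Longrightarrow> lin_comb m N I s c v mod q = lin_comb q N I s c v"
  by (simp add: lin_comb_def mod_mod_cancel)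

lemma lin_comb_coeff_mod: "lin_comb q N I s (\<lambda>x. c x mod q) = lin_comb q N I s c"
proof -
  have eq: "(\<Sum>x\<in>I. c x mod q * s x v) mod q = (\<Sum>x\<in>I. c x * s x v) mod q" for v
  proof -
    have "(\<Sum>x\<in>I. c x mod q * s x v) mod q = (\<Sum>x\<in>I. (c x mod q * s x v) mod q) mod q"
      by (simp add: mod_sum_eq)
    also have "\<dots> = (\<Sum>x\<in>I. (c x * s x v) mod q) mod q"
      by (simp add: mod_mult_left_eq)
    also have "\<dots> = (\<Sum>x\<in>I. c x * s x v) mod q"
      by (simp add: mod_sum_eq)
    finally show ?thesis .
  qed
  then show ?thesis unfolding lin_comb_def by (intro ext) (simp only: eq)
qed

lemma lin_comb_restrict: "lin_comb q N I s (restrict c I) = lin_comb q N I s c"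
proof -
  have eq: "(\<Sum>x\<in>I. restrict c I x * s x v) = (\<Sum>x\<in>I. c x * s x v)" for v
    by (rule sum.cong) auto
  show ?thesis unfolding lin_comb_def by (intro ext) (simp only: eq)
qed

lemma inj_on_lin_comb_if_independent_mod:
  assumes "independent_mod q N I s"
  shows "inj_on (lin_comb q N I s) (\<Pi>\<^sub>E x\<in>I. {0..<q})"
proof (rule inj_onI)
  fix c c' assume c: "c \<in> (\<Pi>\<^sub>E x\<in>I. {0..<q})" and c': "c' \<in> (\<Pi>\<^sub>E x\<in>I. {0..<q})"
    and eq: "lin_comb q N I s c = lin_comb q N I s c'"
  have rel: "\<forall>v\<in>{1..N}. q dvd (\<Sum>x\<in>I. (c x - c' x) * s x v)"
  proof
    fix v assume "v \<in> {1..N}"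
    have "(\<Sum>x\<in>I. c x * s x v) mod q = (\<Sum>x\<in>I. c' x * s x v) mod q"
      using fun_cong[OF eq, of v] \<open>v \<in> {1..N}\<close> by (simp add: lin_comb_def)
    then show "q dvd (\<Sum>x\<in>I. (c x - c' x) * s x v)"
      by (simp add: mod_eq_dvd_iff sum_subtractf left_diff_distrib)
  qed
  have dvd: "q dvd c x - c' x" if "x \<in> I" for x
    using independent_modD[OF assms rel that] .
  have "c x = c' x" if "x \<in> I" for x
    using c c' that dvd[OF that]
    by (intro cong_less_imp_eq_int) (auto simp: PiE_iff cong_iff_dvd_diff)
  then show "c = c'" using c c' by (intro PiE_ext) auto
qed


lemma card_le_card_gen_set_if_independent_mod:
  assumes "q dvd m" and "1 < q" and "finite I" and "independent_mod q N I s"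
    and lin_comb_in: "\<And>c. lin_comb m N I s c \<in> S" and gen: "is_gen_set m N S G"
  shows "card I \<le> card G"
proof -
  let ?D = "\<Pi>\<^sub>E x\<in>I. {0..<q}" and ?D' = "\<Pi>\<^sub>E g\<in>G. {0..<q}"
  have finG: "finite G" using gen unfolding is_gen_set_def by blast
  have "lin_comb q N I s ` ?D \<subseteq> lin_comb q N G (\<lambda>g. g) ` ?D'"
  proof
    fix t assume "t \<in> lin_comb q N I s ` ?D"
    then obtain c where t: "t = lin_comb q N I s c" by blast
    obtain d where d: "\<forall>v\<in>{1..N}. lin_comb m N I s c v = (\<Sum>g\<in>G. d g * g v) mod m"
      using gen lin_comb_in unfolding is_gen_set_def by blast
    have "t = lin_comb q N G (\<lambda>g. g) d"
    proof
      fix v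
      show "t v = lin_comb q N G (\<lambda>g. g) d v"
      proof (cases "v \<in> {1..N}")
        case True
        have "t v = lin_comb m N I s c v mod q"
          unfolding t by (rule lin_comb_mod_cancel[OF assms(1), symmetric])
        also have "\<dots> = (\<Sum>g\<in>G. d g * g v) mod q"
          using d True assms(1) by (simp add: mod_mod_cancel)
        finally show ?thesis using True by (simp add: lin_comb_def)
      next
        case False
        then show ?thesis by (auto simp: t lin_comb_def)
      qed
    qed
    also have "\<dots> = lin_comb q N G (\<lambda>g. g) (restrict (\<lambda>g. d g mod q) G)"
      by (simp only: lin_comb_restrict lin_comb_coeff_mod)
    finally show "t \<in> lin_comb q N G (\<lambda>g. g) ` ?D'" using assms(2) by auto
  qed
  then have "card (lin_comb q N I s ` ?D) \<le> card (lin_comb q N G (\<lambda>g. g) ` ?D')"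
    using finG by (intro card_mono) (auto simp: finite_PiE)
  also have "\<dots> \<le> card ?D'" using finG by (intro card_image_le) (simp add: finite_PiE)
  finally have "nat q ^ card I \<le> nat q ^ card G"
    using inj_on_lin_comb_if_independent_mod[OF assms(4)] assms(3) finG
    by (simp add: card_image card_PiE)
  then show ?thesis using assms(2) power_le_imp_le_exp by simp
qed

lemma rk_ge_card_if_independent_mod:
  assumes "q dvd m" and "1 < q" and "finite I" and "independent_mod q N I s"
    and "\<And>c. lin_comb m N I s c \<in> S" and "is_gen_set m N S G0"
  shows "card I \<le> rk m N S"
  using ex_gen_set_card_rk[OF assms(6)] card_le_card_gen_set_if_independent_mod[OF assms(1-5)]
  by metis

lemma fun_upd_in_splines:
  assumes g: "g \<in> splines m lab n" and x: "0 \<le> x" "x < m"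
    and new_edges: "\<forall>v\<in>{1..n}. lab v (n+1) dvd g v - x"
    and sym: "\<forall>u v. lab u v = lab v u"
  shows "g(n+1 := x) \<in> splines m lab (n+1)"
  unfolding splines_def
proof (intro CollectI conjI ballI allI impI)
  fix u v assume u: "u \<in> {1..n+1}" and v: "v \<in> {1..n+1}" and "u \<noteq> v"
  then consider "u = n+1" "v \<in> {1..n}" | "v = n+1" "u \<in> {1..n}" | "u \<in> {1..n}" "v \<in> {1..n}"
    by fastforce
  then show "lab u v dvd (g(n+1 := x)) u - (g(n+1 := x)) v"
  proof cases
    case 1
    then show ?thesis using new_edges sym by (metis dvd_diff_commute fun_upd_same fun_upd_other
          Suc_eq_plus1 atLeastAtMost_iff not_less_eq_eq order_refl)
  next
    case 2
    then show ?thesis using new_edges by auto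
  next
    case 3
    then show ?thesis using g \<open>u \<noteq> v\<close> unfolding splines_def by auto
  qed
qed (use g x in \<open>auto simp: splines_def le_Suc_eq\<close>)

lemma restrict_in_splines:
  "s \<in> splines m lab (n+1) \<Longrightarrow> (\<lambda>v. if v \<in> {1..n} then s v else 0) \<in> splines m lab n"
  unfolding splines_def by auto

section \<open>Adding a star to a complete graph\<close>

locale star_extension =
  fixes p q :: int and lab :: "nat \<Rightarrow> nat \<Rightarrow> int" and n :: nat
    and G F :: "(nat \<Rightarrow> int) set"
  assumes prime_p: "prime p" and prime_q: "prime q" and p_neq_q: "p \<noteq> q"
    and lab_sym: "\<forall>u v. lab u v = lab v u"
    and lab_in: "\<forall>u\<in>{1..n+1}. \<forall>v\<in>{1..n+1}. u \<noteq> v \<longrightarrow> lab u v \<in> {p, q}"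
    and two_le_n: "2 \<le> n"
    and min_gen: "min_gen_set (p * q) n (splines (p * q) lab n) G"
    and G_eq: "G = insert (trivial_spline n) F" and trivial_notin: "trivial_spline n \<notin> F"
    and F_dvd_p: "\<forall>f\<in>F. \<forall>v\<in>{1..n}. p dvd f v"
begin

lemma pq_pos: "0 < p * q"
  using prime_p prime_q by (simp add: prime_gt_0_int)

lemma p_lt_pq: "p < p * q"
  using mult_strict_left_mono[of 1 q p] prime_p prime_q
  by (simp add: prime_gt_0_int prime_gt_1_int)

lemma lab_dvd_pq: "\<forall>u\<in>{1..n+1}. \<forall>v\<in>{1..n+1}. u \<noteq> v \<longrightarrow> lab u v dvd p * q"
  using lab_in by fastforce

lemma gen_G: "is_gen_set (p * q) n (splines (p * q) lab n) G"
  using min_gen by (simp add: min_gen_set_def)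

lemma finite_G: "finite G" and G_subset: "G \<subseteq> splines (p * q) lab n"
  using gen_G by (simp_all add: is_gen_set_def)

lemma trivial_in_G: "trivial_spline n \<in> G"
  using G_eq by simp

lemma sum_G_eq:
  assumes "v \<in> {1..n}"
  shows "(\<Sum>g\<in>G. c g * g v) = c (trivial_spline n) + (\<Sum>g\<in>F. c g * g v)"
  using assms finite_G G_eq trivial_notin by (simp add: trivial_spline_def)

lemma sum_G_cong_trivial_coeff:
  assumes "v \<in> {1..n}"
  shows "p dvd (\<Sum>g\<in>G. c g * g v) mod (p * q) - c (trivial_spline n)"
proof -
  have "p dvd (\<Sum>g\<in>F. c g * g v)" using F_dvd_p assms by (intro dvd_sum) auto
  then have "(\<Sum>g\<in>G. c g * g v) mod p = c (trivial_spline n) mod p"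
    using sum_G_eq[OF assms] by (simp add: mod_eq_dvd_iff)
  then show ?thesis by (simp add: mod_mod_cancel mod_eq_dvd_iff [symmetric])
qed

lemma splines_cong_mod_p:
  assumes "s \<in> splines (p * q) lab n" and "u \<in> {1..n}" and "v \<in> {1..n}"
  shows "p dvd s u - s v"
proof -
  obtain c where c: "\<forall>v\<in>{1..n}. s v = (\<Sum>g\<in>G. c g * g v) mod (p * q)"
    using gen_G assms(1) unfolding is_gen_set_def by blast
  have "p dvd s u - c (trivial_spline n)" "p dvd s v - c (trivial_spline n)"
    using c assms(2,3) sum_G_cong_trivial_coeff by simp_all
  then have "p dvd (s u - c (trivial_spline n)) - (s v - c (trivial_spline n))" by (rule dvd_diff)
  then show ?thesis by simp
qed

lemma independent_mod_G: "independent_mod q n G (\<lambda>g. g)"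
  unfolding independent_mod_def
proof (intro allI impI ballI)
  fix d g assume rel: "\<forall>v\<in>{1..n}. q dvd (\<Sum>g\<in>G. d g * g v)" and "g \<in> G"
  have F_dvd_q: "q dvd d f" if "f \<in> F" for f
  proof (rule ccontr)
    assume "\<not> q dvd d f"
    have "f \<in> G" using that G_eq by simp
    have "\<forall>v\<in>{1..n}. p dvd f v" using F_dvd_p that by blast
    moreover have "\<forall>v\<in>{1..n}. 0 \<le> f v \<and> f v < p * q"
      using \<open>f \<in> G\<close> G_subset by (auto simp: splines_def)
    ultimately obtain e where "\<forall>v\<in>{1..n}. f v = (\<Sum>g\<in>G-{f}. e g * g v) mod (p * q)"
      using redundant_if_coeff_not_dvd[OF prime_p prime_q p_neq_q finite_G \<open>f \<in> G\<close> _ _ rel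
          \<open>\<not> q dvd d f\<close>]
      by blast
    then show False using min_gen_set_irredundant[OF min_gen \<open>f \<in> G\<close>] by blast
  qed
  have "q dvd d (trivial_spline n)"
  proof -
    have one: "1 \<in> {1..n}" using two_le_n by simp
    have "q dvd (\<Sum>g\<in>F. d g * g 1)" using F_dvd_q by (intro dvd_sum) auto
    moreover have "q dvd d (trivial_spline n) + (\<Sum>g\<in>F. d g * g 1)"
      using rel[rule_format, OF one] by (simp only: sum_G_eq[OF one])
    ultimately show ?thesis by (simp add: dvd_add_left_iff)
  qed
  then show "q dvd d g" using \<open>g \<in> G\<close> F_dvd_q G_eq by auto
qed

definition star_index :: "(nat \<Rightarrow> int) option set"
  where "star_index = insert None (Some ` G)"

definition star_gen :: "(nat \<Rightarrow> int) option \<Rightarrow> nat \<Rightarrow> int"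
  where "star_gen x = (case x of
      None \<Rightarrow> (\<lambda>v. 0)(n+1 := p)
    | Some g \<Rightarrow> g(n+1 := if g = trivial_spline n then 1 else 0))"

lemma finite_star_index: "finite star_index"
  using finite_G by (simp add: star_index_def)

lemma card_star_index: "card star_index = card G + 1"
  using finite_G by (simp add: star_index_def card_image)

lemma sum_star_index: "(\<Sum>x\<in>star_index. f x) = f None + (\<Sum>g\<in>G. f (Some g))"
  using finite_G by (simp add: star_index_def sum.reindex)

lemma star_gen_old_vertex:
  "v \<in> {1..n} \<Longrightarrow> star_gen None v = 0" "v \<in> {1..n} \<Longrightarrow> star_gen (Some g) v = g v"
  by (simp_all add: star_gen_def)

lemma sum_star_gen_new_vertex:
  "(\<Sum>x\<in>star_index. c x * star_gen x (n+1)) = c None * p + c (Some (trivial_spline n))"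
proof -
  have "(\<Sum>g\<in>G. c (Some g) * star_gen (Some g) (n+1))
      = (\<Sum>g\<in>G. if g = trivial_spline n then c (Some g) else 0)"
    by (rule sum.cong) (simp_all add: star_gen_def)
  also have "\<dots> = c (Some (trivial_spline n))" using finite_G trivial_in_G by simp
  finally show ?thesis by (simp add: sum_star_index star_gen_def)
qed

lemma independent_mod_star_gen: "independent_mod q (n+1) star_index star_gen"
  unfolding independent_mod_def
proof (intro allI impI)
  fix c assume rel: "\<forall>v\<in>{1..n+1}. q dvd (\<Sum>x\<in>star_index. c x * star_gen x v)"
  have "\<forall>v\<in>{1..n}. q dvd (\<Sum>g\<in>G. c (Some g) * g v)"
  proof
    fix v assume v: "v \<in> {1..n}"
    then have "q dvd (\<Sum>x\<in>star_index. c x * star_gen x v)" using rel by simp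
    then show "q dvd (\<Sum>g\<in>G. c (Some g) * g v)"
      using v by (simp add: sum_star_index star_gen_old_vertex)
  qed
  then have old: "q dvd c (Some g)" if "g \<in> G" for g
    using independent_modD[OF independent_mod_G _ that, of "\<lambda>g. c (Some g)"] by simp
  have "q dvd (\<Sum>x\<in>star_index. c x * star_gen x (n+1))" using bspec[OF rel, of "n+1"] by simp
  then have "q dvd c None * p + c (Some (trivial_spline n))"
    by (simp only: sum_star_gen_new_vertex)
  then have "q dvd c None * p" using old trivial_in_G by (simp add: dvd_add_left_iff)
  moreover have "\<not> q dvd p" using prime_p prime_q p_neq_q primes_dvd_imp_eq by blast
  ultimately have "q dvd c None" using prime_q prime_dvd_mult_iff by blast
  then show "\<forall>x\<in>star_index. q dvd c x" using old by (auto simp: star_index_def)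
qed

context
  assumes star_p: "\<forall>j\<in>{1..n}. lab j (n+1) = p"
begin

lemma star_gen_in_splines:
  assumes "x \<in> star_index"
  shows "star_gen x \<in> splines (p * q) lab (n+1)"
proof (cases x)
  case None
  have "(\<lambda>v. 0) \<in> splines (p * q) lab n" using pq_pos by (simp add: splines_def)
  then have "(\<lambda>v. 0)(n+1 := p) \<in> splines (p * q) lab (n+1)"
    using star_p lab_sym p_lt_pq prime_gt_0_int[OF prime_p] by (intro fun_upd_in_splines) auto
  then show ?thesis using None by (simp add: star_gen_def)
next
  case (Some g)
  then have "g \<in> G" using assms by (auto simp: star_index_def)
  have "g(n+1 := if g = trivial_spline n then 1 else 0) \<in> splines (p * q) lab (n+1)"
  proof (rule fun_upd_in_splines[OF _ _ _ _ lab_sym])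
    show "g \<in> splines (p * q) lab n" using \<open>g \<in> G\<close> G_subset by auto
    show "0 \<le> (if g = trivial_spline n then 1 else 0::int)" by simp
    show "(if g = trivial_spline n then 1 else 0) < p * q"
      using p_lt_pq prime_gt_1_int[OF prime_p] by (simp add: order_less_trans)
    show "\<forall>v\<in>{1..n}. lab v (n+1) dvd g v - (if g = trivial_spline n then 1 else 0)"
      using star_p F_dvd_p \<open>g \<in> G\<close> G_eq by (auto simp: trivial_spline_def)
  qed
  then show ?thesis using Some by (simp add: star_gen_def)
qed

lemma is_gen_set_star_gen:
  "is_gen_set (p * q) (n+1) (splines (p * q) lab (n+1)) (star_gen ` star_index)"
proof (rule is_gen_set_image[OF finite_star_index])
  show "star_gen ` star_index \<subseteq> splines (p * q) lab (n+1)"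
    using star_gen_in_splines by auto
  show "\<forall>s\<in>splines (p * q) lab (n+1). \<exists>d. \<forall>v\<in>{1..n+1}.
      s v = (\<Sum>x\<in>star_index. d x * star_gen x v) mod (p * q)"
  proof
    fix s assume s: "s \<in> splines (p * q) lab (n+1)"
    obtain c where c: "\<forall>v\<in>{1..n}. s v = (\<Sum>g\<in>G. c g * g v) mod (p * q)"
      using gen_G restrict_in_splines[OF s] unfolding is_gen_set_def by fastforce
    have one: "1 \<in> {1..n}" using two_le_n by simp
    have "p dvd s 1 - c (trivial_spline n)"
      using c one sum_G_cong_trivial_coeff[OF one] by simp
    moreover have "p dvd s 1 - s (n+1)"
      using s star_p one unfolding splines_def by fastforce
    ultimately have "p dvd (s 1 - c (trivial_spline n)) - (s 1 - s (n+1))" by (rule dvd_diff)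
    then obtain k where "s (n+1) - c (trivial_spline n) = p * k" by (auto elim!: dvdE)
    then have k: "s (n+1) = c (trivial_spline n) + k * p" by (simp add: algebra_simps)
    define d where "d x = (case x of None \<Rightarrow> k | Some g \<Rightarrow> c g)" for x
    have "s v = (\<Sum>x\<in>star_index. d x * star_gen x v) mod (p * q)" if v: "v \<in> {1..n+1}" for v
    proof (cases "v = n+1")
      case True
      have "(\<Sum>x\<in>star_index. d x * star_gen x (n+1)) = s (n+1)"
        using sum_star_gen_new_vertex[of d] k by (simp add: d_def)
      moreover have "0 \<le> s (n+1)" "s (n+1) < p * q" using s unfolding splines_def by auto
      ultimately show ?thesis using True by simp
    next
      case False
      then have "v \<in> {1..n}" using v by auto
      then show ?thesis using c by (simp add: sum_star_index star_gen_old_vertex d_def)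
    qed
    then show "\<exists>d. \<forall>v\<in>{1..n+1}. s v = (\<Sum>x\<in>star_index. d x * star_gen x v) mod (p * q)"
      by (intro exI[where x=d]) blast
  qed
qed

lemma rk_star_all_p: "rk (p * q) (n+1) (splines (p * q) lab (n+1)) = card G + 1"
proof (rule antisym)
  show "rk (p * q) (n+1) (splines (p * q) lab (n+1)) \<le> card G + 1"
    using rk_le[OF is_gen_set_star_gen] card_image_le[OF finite_star_index, of star_gen]
    by (simp add: card_star_index)
  have "card star_index \<le> rk (p * q) (n+1) (splines (p * q) lab (n+1))"
  proof (rule rk_ge_card_if_independent_mod[OF _ _ finite_star_index independent_mod_star_gen
        _ is_gen_set_star_gen])
    show "q dvd p * q" by simp
    show "1 < q" using prime_q by (simp add: prime_gt_1_int)
    show "lin_comb (p * q) (n+1) star_index star_gen c \<in> splines (p * q) lab (n+1)" for c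
      using pq_pos star_gen_in_splines lab_dvd_pq by (intro lin_comb_in_splines) auto
  qed
  then show "card G + 1 \<le> rk (p * q) (n+1) (splines (p * q) lab (n+1))"
    by (simp add: card_star_index)
qed

end

context
  fixes j :: nat
  assumes j_in: "j \<in> {1..n}" and lab_j: "lab j (n+1) = q"
    and lab_others: "\<forall>v\<in>{1..n}. v \<noteq> j \<longrightarrow> lab v (n+1) = p"
begin

lemma spline_new_vertex_eq:
  assumes s: "s \<in> splines (p * q) lab (n+1)"
  shows "s (n+1) = s j"
proof -
  define v where "v = (if j = 1 then 2 else 1::nat)"
  have v: "v \<in> {1..n}" "v \<noteq> j" using two_le_n j_in by (auto simp: v_def)
  have "p dvd s v - s j"
    using splines_cong_mod_p[OF restrict_in_splines[OF s] v(1) j_in] v(1) j_in by simp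
  moreover have "p dvd s v - s (n+1)"
    using s v lab_others unfolding splines_def by fastforce
  ultimately have "p dvd (s v - s j) - (s v - s (n+1))" by (rule dvd_diff)
  then have "p dvd s j - s (n+1)" by (simp add: dvd_diff_commute)
  moreover have "q dvd s j - s (n+1)"
    using s j_in lab_j unfolding splines_def by fastforce
  ultimately have "p * q dvd s j - s (n+1)"
    using prime_p prime_q p_neq_q by (simp add: divides_mult primes_coprime)
  moreover have "0 \<le> s j" "s j < p * q" "0 \<le> s (n+1)" "s (n+1) < p * q"
    using s j_in unfolding splines_def by auto
  ultimately show ?thesis
    by (intro cong_less_imp_eq_int[symmetric]) (simp_all add: cong_iff_dvd_diff)
qed

lemma extend_image: "(\<lambda>s. s(n+1 := s j)) ` splines (p * q) lab n = splines (p * q) lab (n+1)"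
proof
  show "(\<lambda>s. s(n+1 := s j)) ` splines (p * q) lab n \<subseteq> splines (p * q) lab (n+1)"
  proof clarify
    fix s assume s: "s \<in> splines (p * q) lab n"
    have "lab v (n+1) dvd s v - s j" if "v \<in> {1..n}" for v
      using splines_cong_mod_p[OF s that j_in] lab_others that by (cases "v = j") auto
    then show "s(n+1 := s j) \<in> splines (p * q) lab (n+1)"
      using s j_in lab_sym by (intro fun_upd_in_splines) (auto simp: splines_def)
  qed
  show "splines (p * q) lab (n+1) \<subseteq> (\<lambda>s. s(n+1 := s j)) ` splines (p * q) lab n"
  proof
    fix t assume t: "t \<in> splines (p * q) lab (n+1)"
    define s where "s = (\<lambda>v. if v \<in> {1..n} then t v else 0)"
    have "t = s(n+1 := s j)"
      using t spline_new_vertex_eq[OF t] j_in unfolding s_def splines_def by (auto simp: le_Suc_eq)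
    then show "t \<in> (\<lambda>s. s(n+1 := s j)) ` splines (p * q) lab n"
      using restrict_in_splines[OF t] unfolding s_def by blast
  qed
qed

lemma restrict_image:
  "(\<lambda>s v. if v \<in> {1..n} then s v else 0) ` splines (p * q) lab (n+1) = splines (p * q) lab n"
proof
  show "(\<lambda>s v. if v \<in> {1..n} then s v else 0) ` splines (p * q) lab (n+1)
      \<subseteq> splines (p * q) lab n"
    using restrict_in_splines by blast
  show "splines (p * q) lab n
      \<subseteq> (\<lambda>s v. if v \<in> {1..n} then s v else 0) ` splines (p * q) lab (n+1)"
  proof
    fix s assume s: "s \<in> splines (p * q) lab n"
    then have "s(n+1 := s j) \<in> splines (p * q) lab (n+1)" using extend_image by blast
    moreover have "s = (\<lambda>v. if v \<in> {1..n} then (s(n+1 := s j)) v else 0)"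
      using s unfolding splines_def by auto
    ultimately show "s \<in> (\<lambda>s v. if v \<in> {1..n} then s v else 0) ` splines (p * q) lab (n+1)"
      by blast
  qed
qed

lemma rk_star_one_q:
  "rk (p * q) (n+1) (splines (p * q) lab (n+1)) = rk (p * q) n (splines (p * q) lab n)"
proof (rule antisym)
  let ?\<sigma> = "\<lambda>v. if v = n+1 then j else v"
  have \<sigma>: "?\<sigma> ` {1..n+1} \<subseteq> {1..n}" using j_in by auto
  have extend: "(s(n+1 := s j)) v = s (?\<sigma> v)" for s :: "nat \<Rightarrow> int" and v by simp
  show "rk (p * q) (n+1) (splines (p * q) lab (n+1)) \<le> rk (p * q) n (splines (p * q) lab n)"
    by (rule rk_transfer_le[OF gen_G extend_image \<sigma> extend])
  have "is_gen_set (p * q) (n+1) (splines (p * q) lab (n+1)) ((\<lambda>s. s(n+1 := s j)) ` G)"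
    by (rule is_gen_set_transfer[OF gen_G extend_image \<sigma> extend])
  then show "rk (p * q) n (splines (p * q) lab n) \<le> rk (p * q) (n+1) (splines (p * q) lab (n+1))"
    by (rule rk_transfer_le[OF _ restrict_image, where \<sigma>="\<lambda>v. v"]) auto
qed

end

lemma rk_star_unique_q:
  assumes "\<exists>!j. j \<in> {1..n} \<and> lab j (n+1) = q"
  shows "rk (p * q) (n+1) (splines (p * q) lab (n+1)) = rk (p * q) n (splines (p * q) lab n)"
proof -
  obtain j where j: "j \<in> {1..n}" "lab j (n+1) = q"
    and unique: "\<forall>v. v \<in> {1..n} \<and> lab v (n+1) = q \<longrightarrow> v = j"
    using assms by blast
  have "\<forall>v\<in>{1..n}. v \<noteq> j \<longrightarrow> lab v (n+1) = p"
  proof (intro ballI impI)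
    fix v assume "v \<in> {1..n}" "v \<noteq> j"
    then have "lab v (n+1) \<in> {p, q}" "lab v (n+1) \<noteq> q" using lab_in unique by auto
    then show "lab v (n+1) = p" by blast
  qed
  with j show ?thesis by (rule rk_star_one_q)
qed

end

theorem mainTheorem10:
  fixes p q :: int and n i :: nat and lab :: "nat \<Rightarrow> nat \<Rightarrow> int"
  assumes "prime p" and "prime q" and "p \<noteq> q"
    and "\<forall>u v. lab u v = lab v u"
    and "\<forall>u\<in>{1..n+1}. \<forall>v\<in>{1..n+1}. u \<noteq> v \<longrightarrow> lab u v \<in> {p, q}"
    and "1 < i" and "i \<le> n"
    and "\<exists>G F. min_gen_set (p*q) n (splines (p*q) lab n) G
            \<and> G = insert (trivial_spline n) F \<and> trivial_spline n \<notin> F \<and> card F = i - 1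
            \<and> (\<forall>f\<in>F. (\<exists>k. flow_up n f k) \<and> (\<forall>v\<in>{1..n}. p dvd f v))"
  shows "((\<forall>j\<in>{1..n}. lab j (n+1) = p) \<longrightarrow>
           rk (p*q) (n+1) (splines (p*q) lab (n+1)) = rk (p*q) n (splines (p*q) lab n) + 1)
     \<and> ((\<exists>!j. j \<in> {1..n} \<and> lab j (n+1) = q) \<longrightarrow>
           rk (p*q) (n+1) (splines (p*q) lab (n+1)) = rk (p*q) n (splines (p*q) lab n))"
proof -
  obtain G F where G: "min_gen_set (p*q) n (splines (p*q) lab n) G"
    "G = insert (trivial_spline n) F" "trivial_spline n \<notin> F" "\<forall>f\<in>F. \<forall>v\<in>{1..n}. p dvd f v"
    using assms(8) by blast
  interpret star_extension p q lab n G F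
    using assms(1-7) G by unfold_locales auto
  have card_G: "card G = rk (p*q) n (splines (p*q) lab n)"
    using min_gen by (simp add: min_gen_set_def)
  show ?thesis
  proof (intro conjI impI)
    assume "\<forall>j\<in>{1..n}. lab j (n+1) = p"
    then show "rk (p*q) (n+1) (splines (p*q) lab (n+1)) = rk (p*q) n (splines (p*q) lab n) + 1"
      using rk_star_all_p card_G by simp
  next
    assume "\<exists>!j. j \<in> {1..n} \<and> lab j (n+1) = q"
    then show "rk (p*q) (n+1) (splines (p*q) lab (n+1)) = rk (p*q) n (splines (p*q) lab n)"
      by (rule rk_star_unique_q)
  qed
qed

end
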